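(* Consider $N$ agents, all of whose neighborhoods are $\mathcal{N}(i)=\{1,\dots,N\}$ (fully connected debate graph), on a probability space with sub-$\sigma$-algebras $\mathcal{F}_{t-1}$. At round $t-1$ each agent $j$ emits random variables $y_{j,t-1}\in\{1,\dots,K\}$ and $w_{j,t-1}\in(0,1]$. Let $p_{j,t-1}=\Pr(y_{j,t-1}=1\mid\mathcal{F}_{t-1})$, $\rho_{j,t-1}=\mathbb{E}[w_{j,t-1}\mathbf{1}\{y_{j,t-1}=1\}\mid\mathcal{F}_{t-1}]/\mathbb{E}[w_{j,t-1}\mid\mathcal{F}_{t-1}]$, and $$q_{i,t-1}=\frac{\mathbb{E}\big[\sum_{j}w_{j,t-1}\mathbf{1}\{y_{j,t-1}=1\}\mid\mathcal{F}_{t-1}\big]}{\mathbb{E}\big[\sum_j w_{j,t-1}\mid\mathcal{F}_{t-1}\big]}.$$ Assume confidence is positively correlated with correctness: $\rho_{j,t-1}\ge p_{j,t-1}$ almost surely for all $j,t$, with strict inequality on a set of positive probability for at least one agent and round. Assume homogeneity: $p_{j,t-1}=p_{i,t-1}$ for all $j$. Then $q_{i,t-1}\ge p_{i,t-1}$, with strict inequality on a set of positive probability.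
   Context: Option $1$ is the unique correct answer; $\mathcal{F}_{t-1}$ is the debate history up to round $t-1$; $w_{j,t-1}$ is agent $j$'s expressed confidence and $p_{j,t-1}$ its probability of answering correctly. *)

theory Defs
  imports "HOL-Probability.Probability"
begin

definition correct :: "('a \<Rightarrow> nat) \<Rightarrow> 'a \<Rightarrow> real" where
  "correct y x = (if y x = 1 then 1 else 0)"

definition p_cond :: "'a measure \<Rightarrow> 'a measure \<Rightarrow> ('a \<Rightarrow> nat) \<Rightarrow> 'a \<Rightarrow> real" where
  "p_cond M F y = real_cond_exp M F (correct y)"

definition rho_cond :: "'a measure \<Rightarrow> 'a measure \<Rightarrow> ('a \<Rightarrow> nat) \<Rightarrow> ('a \<Rightarrow> real) \<Rightarrow> 'a \<Rightarrow> real" where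
  "rho_cond M F y w = (\<lambda>x. real_cond_exp M F (\<lambda>z. w z * correct y z) x / real_cond_exp M F w x)"

definition q_cond :: "'a measure \<Rightarrow> 'a measure \<Rightarrow> nat set \<Rightarrow> (nat \<Rightarrow> 'a \<Rightarrow> nat) \<Rightarrow> (nat \<Rightarrow> 'a \<Rightarrow> real) \<Rightarrow> 'a \<Rightarrow> real" where
  "q_cond M F Nb y w = (\<lambda>x. real_cond_exp M F (\<lambda>z. \<Sum>j\<in>Nb. w j z * correct (y j) z) x
                          / real_cond_exp M F (\<lambda>z. \<Sum>j\<in>Nb. w j z) x)"

end

theory Submission
  imports Defs
begin

text \<open>Conditional expectation is linear, so \<open>q\<close> is a.e. the mediant
  \<open>(\<Sum>j. E[w\<^sub>j 1{y\<^sub>j = 1} | F]) / (\<Sum>j. E[w\<^sub>j | F])\<close> of the fractions whose values are the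
  \<open>\<rho>\<^sub>j\<close>. With positive denominators a mediant lies above every common lower bound of
  its fractions, strictly so as soon as one fraction is strictly above it. Positive
  correlation and homogeneity make \<open>p\<^sub>i\<close> such a common lower bound, and the
  strictness event for one agent is contained (a.e.) in the strictness event for \<open>q\<close>.\<close>

lemma sum_divide_sum_ge:
  fixes E W :: "'b \<Rightarrow> 'a::linordered_field"
  assumes "finite I" "I \<noteq> {}" "\<And>j. j \<in> I \<Longrightarrow> W j > 0" "\<And>j. j \<in> I \<Longrightarrow> P \<le> E j / W j"
  shows "P \<le> (\<Sum>j\<in>I. E j) / (\<Sum>j\<in>I. W j)"
proof -
  have "P * W j \<le> E j" if "j \<in> I" for j
    using assms(3,4)[OF that] by (simp add: pos_le_divide_eq)
  then have "P * (\<Sum>j\<in>I. W j) \<le> (\<Sum>j\<in>I. E j)"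
    unfolding sum_distrib_left by (rule sum_mono)
  moreover have "(\<Sum>j\<in>I. W j) > 0"
    using assms(1-3) by (intro sum_pos)
  ultimately show ?thesis by (simp add: pos_le_divide_eq)
qed

lemma sum_divide_sum_gt:
  fixes E W :: "'b \<Rightarrow> 'a::linordered_field"
  assumes "finite I" "j0 \<in> I" "\<And>j. j \<in> I \<Longrightarrow> W j > 0" "\<And>j. j \<in> I \<Longrightarrow> P \<le> E j / W j"
    and "P < E j0 / W j0"
  shows "P < (\<Sum>j\<in>I. E j) / (\<Sum>j\<in>I. W j)"
proof -
  have "P * W j \<le> E j" if "j \<in> I" for j
    using assms(3,4)[OF that] by (simp add: pos_le_divide_eq)
  moreover have "P * W j0 < E j0"
    using assms(3)[OF assms(2)] assms(5) by (simp add: pos_less_divide_eq)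
  ultimately have "(\<Sum>j\<in>I. P * W j) < (\<Sum>j\<in>I. E j)"
    using assms(1,2) by (intro sum_strict_mono_ex1) auto
  moreover have "(\<Sum>j\<in>I. W j) > 0"
    using assms(1-3) by (intro sum_pos) auto
  ultimately show ?thesis by (simp add: sum_distrib_left pos_less_divide_eq)
qed

lemma finite_measure_subalgebra_if_prob_space:
  "prob_space M \<Longrightarrow> subalgebra M G \<Longrightarrow> finite_measure_subalgebra M G"
  by (simp add: finite_measure_subalgebra_def finite_measure_subalgebra_axioms_def
      prob_space.finite_measure)

lemma AE_p_cond_le_rho_cond_if_homogeneous:
  assumes "finite I"
    and "\<And>j. j \<in> I \<Longrightarrow> AE x in M. p_cond M G (ys j) x \<le> rho_cond M G (ys j) (ws j) x"
    and "\<And>j. j \<in> I \<Longrightarrow> AE x in M. p_cond M G (ys j) x = p_cond M G (ys i) x"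
  shows "AE x in M. \<forall>j\<in>I. p_cond M G (ys i) x \<le> rho_cond M G (ys j) (ws j) x"
proof (rule AE_finite_allI[OF assms(1)])
  show "AE x in M. p_cond M G (ys i) x \<le> rho_cond M G (ys j) (ws j) x" if "j \<in> I" for j
    using assms(2,3)[OF that] by eventually_elim simp
qed

lemma (in finite_measure) measure_Collect_pos_mono_AE:
  assumes "AE x in M. P x \<longrightarrow> Q x" "Measurable.pred M Q" "0 < measure M {x \<in> space M. P x}"
  shows "0 < measure M {x \<in> space M. Q x}"
proof -
  have "measure M {x \<in> space M. P x} \<le> measure M {x \<in> space M. Q x}"
    using assms(1,2) by (intro finite_measure_mono_AE) auto
  with assms(3) show ?thesis
    by linarith
qed

context sigma_finite_subalgebra
begin

lemma integrable_weight_mult_correct: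
  assumes "integrable M w" "y \<in> measurable M (count_space UNIV)"
  shows "integrable M (\<lambda>z. w z * correct y z)"
  by (rule Bochner_Integration.integrable_bound[OF assms(1)]) (use assms in \<open>auto simp: correct_def\<close>)

lemma AE_q_cond_eq_mediant:
  assumes "\<And>j. integrable M (ws j)" "\<And>j. ys j \<in> measurable M (count_space UNIV)"
  shows "AE x in M. q_cond M F I ys ws x =
    (\<Sum>j\<in>I. real_cond_exp M F (\<lambda>z. ws j z * correct (ys j) z) x) / (\<Sum>j\<in>I. real_cond_exp M F (ws j) x)"
proof -
  have "AE x in M. real_cond_exp M F (\<lambda>z. \<Sum>j\<in>I. ws j z * correct (ys j) z) x
      = (\<Sum>j\<in>I. real_cond_exp M F (\<lambda>z. ws j z * correct (ys j) z) x)"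
    using assms by (intro real_cond_exp_sum integrable_weight_mult_correct)
  moreover have "AE x in M. real_cond_exp M F (\<lambda>z. \<Sum>j\<in>I. ws j z) x = (\<Sum>j\<in>I. real_cond_exp M F (ws j) x)"
    using assms(1) by (rule real_cond_exp_sum)
  ultimately show ?thesis
    by eventually_elim (simp add: q_cond_def)
qed

lemma AE_cond_exp_weights_pos:
  assumes "finite I" "\<And>j. integrable M (ws j)" "\<And>j. j \<in> I \<Longrightarrow> AE x in M. ws j x > 0"
  shows "AE x in M. \<forall>j\<in>I. real_cond_exp M F (ws j) x > 0"
  using assms by (intro AE_finite_allI real_cond_exp_gr_c)

lemma AE_q_cond_ge:
  assumes "finite I" "I \<noteq> {}"
    and "\<And>j. integrable M (ws j)" "\<And>j. j \<in> I \<Longrightarrow> AE x in M. ws j x > 0"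
    and "\<And>j. ys j \<in> measurable M (count_space UNIV)"
    and "AE x in M. \<forall>j\<in>I. P x \<le> rho_cond M F (ys j) (ws j) x"
  shows "AE x in M. P x \<le> q_cond M F I ys ws x"
proof -
  have "AE x in M. \<forall>j\<in>I. real_cond_exp M F (ws j) x > 0"
    using assms(1,3,4) by (rule AE_cond_exp_weights_pos)
  with AE_q_cond_eq_mediant[of ws ys I, OF assms(3,5)] assms(6) show ?thesis
    by eventually_elim (simp add: sum_divide_sum_ge[OF assms(1,2)] rho_cond_def)
qed

lemma AE_q_cond_gt_if_rho_cond_gt:
  assumes "finite I" "j0 \<in> I"
    and "\<And>j. integrable M (ws j)" "\<And>j. j \<in> I \<Longrightarrow> AE x in M. ws j x > 0"
    and "\<And>j. ys j \<in> measurable M (count_space UNIV)"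
    and "AE x in M. \<forall>j\<in>I. P x \<le> rho_cond M F (ys j) (ws j) x"
  shows "AE x in M. P x < rho_cond M F (ys j0) (ws j0) x \<longrightarrow> P x < q_cond M F I ys ws x"
proof -
  have "AE x in M. \<forall>j\<in>I. real_cond_exp M F (ws j) x > 0"
    using assms(1,3,4) by (rule AE_cond_exp_weights_pos)
  with AE_q_cond_eq_mediant[of ws ys I, OF assms(3,5)] assms(6) show ?thesis
    by eventually_elim (auto simp: sum_divide_sum_gt[OF assms(1,2)] rho_cond_def)
qed

lemma AE_q_cond_ge_p_cond:
  assumes "finite I" "i \<in> I"
    and "\<And>j. integrable M (ws j)" "\<And>j. j \<in> I \<Longrightarrow> AE x in M. ws j x > 0"
    and "\<And>j. ys j \<in> measurable M (count_space UNIV)"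
    and "\<And>j. j \<in> I \<Longrightarrow> AE x in M. p_cond M F (ys j) x \<le> rho_cond M F (ys j) (ws j) x"
    and "\<And>j. j \<in> I \<Longrightarrow> AE x in M. p_cond M F (ys j) x = p_cond M F (ys i) x"
  shows "AE x in M. p_cond M F (ys i) x \<le> q_cond M F I ys ws x"
  using assms by (intro AE_q_cond_ge AE_p_cond_le_rho_cond_if_homogeneous) auto

end

lemma (in finite_measure_subalgebra) measure_q_cond_gt_p_cond_pos:
  assumes "finite I" "i \<in> I" "j0 \<in> I"
    and "\<And>j. integrable M (ws j)" "\<And>j. j \<in> I \<Longrightarrow> AE x in M. ws j x > 0"
    and "\<And>j. ys j \<in> measurable M (count_space UNIV)"
    and "\<And>j. j \<in> I \<Longrightarrow> AE x in M. p_cond M F (ys j) x \<le> rho_cond M F (ys j) (ws j) x"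
    and "\<And>j. j \<in> I \<Longrightarrow> AE x in M. p_cond M F (ys j) x = p_cond M F (ys i) x"
    and "0 < measure M {x \<in> space M. p_cond M F (ys j0) x < rho_cond M F (ys j0) (ws j0) x}"
  shows "0 < measure M {x \<in> space M. p_cond M F (ys i) x < q_cond M F I ys ws x}"
proof (rule measure_Collect_pos_mono_AE)
  have "AE x in M. p_cond M F (ys i) x < rho_cond M F (ys j0) (ws j0) x
      \<longrightarrow> p_cond M F (ys i) x < q_cond M F I ys ws x"
    using assms(1-8) by (intro AE_q_cond_gt_if_rho_cond_gt AE_p_cond_le_rho_cond_if_homogeneous) auto
  with assms(8)[OF assms(3)]
  show "AE x in M. p_cond M F (ys j0) x < rho_cond M F (ys j0) (ws j0) x
      \<longrightarrow> p_cond M F (ys i) x < q_cond M F I ys ws x"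
    by eventually_elim simp
  show "Measurable.pred M (\<lambda>x. p_cond M F (ys i) x < q_cond M F I ys ws x)"
    unfolding q_cond_def p_cond_def by measurable
qed (use assms(9) in simp)

theorem corollary1:
  fixes M :: "'a measure" and F :: "nat \<Rightarrow> 'a measure" and N K :: nat
    and y :: "nat \<Rightarrow> nat \<Rightarrow> 'a \<Rightarrow> nat" and w :: "nat \<Rightarrow> nat \<Rightarrow> 'a \<Rightarrow> real"
  assumes "prob_space M"
    and "\<And>t. subalgebra M (F t)"
    and "\<And>j t. y j t \<in> measurable M (count_space UNIV)"
    and "\<And>j t. w j t \<in> borel_measurable M"
    and "\<And>j t x. x \<in> space M \<Longrightarrow> y j t x \<in> {1..K}"
    and "\<And>j t x. x \<in> space M \<Longrightarrow> w j t x \<in> {0<..1}"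
    and pos_corr: "\<And>j t. j \<in> {1..N} \<Longrightarrow>
        AE x in M. rho_cond M (F t) (y j t) (w j t) x \<ge> p_cond M (F t) (y j t) x"
    and strict: "\<exists>j\<in>{1..N}. \<exists>t. measure M {x \<in> space M.
        rho_cond M (F t) (y j t) (w j t) x > p_cond M (F t) (y j t) x} > 0"
    and homog: "\<And>i j t. i \<in> {1..N} \<Longrightarrow> j \<in> {1..N} \<Longrightarrow>
        AE x in M. p_cond M (F t) (y j t) x = p_cond M (F t) (y i t) x"
  shows "(\<forall>i\<in>{1..N}. \<forall>t. AE x in M.
            q_cond M (F t) {1..N} (\<lambda>j. y j t) (\<lambda>j. w j t) x \<ge> p_cond M (F t) (y i t) x)
       \<and> (\<forall>i\<in>{1..N}. \<exists>t. measure M {x \<in> space M.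
            q_cond M (F t) {1..N} (\<lambda>j. y j t) (\<lambda>j. w j t) x > p_cond M (F t) (y i t) x} > 0)"
proof -
  interpret prob_space M by fact
  have sub: "finite_measure_subalgebra M (F t)" for t
    using assms(1,2) by (rule finite_measure_subalgebra_if_prob_space)
  have weights: "integrable M (w j t)" "AE x in M. w j t x > 0" for j t
    using assms(4,6) by (auto intro!: integrable_const_bound[where B=1] simp: less_eq_real_def)
  have "AE x in M. p_cond M (F t) (y i t) x \<le> q_cond M (F t) {1..N} (\<lambda>j. y j t) (\<lambda>j. w j t) x"
    if "i \<in> {1..N}" for i t
    by (rule sigma_finite_subalgebra.AE_q_cond_ge_p_cond
          [OF finite_measure_subalgebra_is_sigma_finite[OF sub], where ys="\<lambda>j. y j t" and ws="\<lambda>j. w j t"])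
      (use that weights assms(3) pos_corr homog in auto)
  moreover obtain j0 t0 where "j0 \<in> {1..N}" and
    "0 < measure M {x \<in> space M. p_cond M (F t0) (y j0 t0) x < rho_cond M (F t0) (y j0 t0) (w j0 t0) x}"
    using strict by blast
  then have "0 < measure M {x \<in> space M.
      p_cond M (F t0) (y i t0) x < q_cond M (F t0) {1..N} (\<lambda>j. y j t0) (\<lambda>j. w j t0) x}"
    if "i \<in> {1..N}" for i
    by (intro finite_measure_subalgebra.measure_q_cond_gt_p_cond_pos[OF sub,
          where ys="\<lambda>j. y j t0" and ws="\<lambda>j. w j t0"])
      (use that weights assms(3) pos_corr homog in auto)
  ultimately show ?thesis
    by blast
qed

end
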